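(* Let $R$ and $S$ be commutative rings with identity, $f:R\to S$ a ring homomorphism, and $J$ a nonzero proper ideal of $S$ with $J\subseteq\operatorname{Nil}(S)$. Then $R\bowtie^f J$ is properly zipped if and only if $R$ is properly zipped. In particular, for any $R$-module $M$, the trivial extension $R\ltimes M$ is properly zipped if and only if $R$ is properly zipped.
   Context: $R\bowtie^f J:=\{(r,f(r)+j)\mid r\in R,\ j\in J\}$, a subring of $R\times S$. $\operatorname{Nil}(S)$ is the nilradical of $S$. The trivial extension $R\ltimes M$ is the ring $R\oplus M$ with multiplication $(r,m)(r',m')=(rr',rm'+r'm)$. A commutative ring $A$ is properly zipped if whenever a prime ideal $\mathfrak{p}$ of $A$ contains the intersection of a family $\{\mathfrak{p}_i\}_i$ of prime ideals of $A$, then $\mathfrak{p}_i\subseteq\mathfrak{p}$ for some $i$. *)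

theory Defs
  imports "HOL-Algebra.Chinese_Remainder" "HOL-Algebra.Module"
begin

definition nilradical :: "('a, 'm) ring_scheme \<Rightarrow> 'a set" where
  "nilradical S = {a \<in> carrier S. \<exists>n::nat. a [^]\<^bsub>S\<^esub> n = \<zero>\<^bsub>S\<^esub>}"

definition amalgamation ::
  "('a, 'm) ring_scheme \<Rightarrow> ('b, 'n) ring_scheme \<Rightarrow> ('a \<Rightarrow> 'b) \<Rightarrow> 'b set \<Rightarrow> ('a \<times> 'b) ring" where
  "amalgamation R S f J = (RDirProd R S)
     \<lparr>carrier := {(r, f r \<oplus>\<^bsub>S\<^esub> j) | r j. r \<in> carrier R \<and> j \<in> J}\<rparr>"

definition trivial_extension ::
  "('a, 'm) ring_scheme \<Rightarrow> ('a, 'b) module \<Rightarrow> ('a \<times> 'b) ring" where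
  "trivial_extension R M =
     \<lparr>carrier = carrier R \<times> carrier M,
      mult = (\<lambda>(r, m) (r', m'). (r \<otimes>\<^bsub>R\<^esub> r', (r \<odot>\<^bsub>M\<^esub> m') \<oplus>\<^bsub>M\<^esub> (r' \<odot>\<^bsub>M\<^esub> m))),
      one = (\<one>\<^bsub>R\<^esub>, \<zero>\<^bsub>M\<^esub>),
      zero = (\<zero>\<^bsub>R\<^esub>, \<zero>\<^bsub>M\<^esub>),
      add = (\<lambda>(r, m) (r', m'). (r \<oplus>\<^bsub>R\<^esub> r', m \<oplus>\<^bsub>M\<^esub> m'))\<rparr>"

text \<open>A family is given
  as a set P of prime ideals; the intersection is taken inside the carrier.\<close>
definition properly_zipped :: "('a, 'm) ring_scheme \<Rightarrow> bool" where
  "properly_zipped A \<longleftrightarrow>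
     (\<forall>p P. primeideal p A \<longrightarrow> (\<forall>q\<in>P. primeideal q A) \<longrightarrow>
        carrier A \<inter> \<Inter>P \<subseteq> p \<longrightarrow> (\<exists>q\<in>P. q \<subseteq> p))"

end

theory Submission
  imports "HOL-Algebra.Subrings" Defs
begin

text \<open>A surjective ring homomorphism \<open>\<phi> : A \<rightarrow> B\<close> whose kernel consists of nilpotents
  induces a bijection between the prime spectra: every prime of \<open>A\<close> contains the kernel,
  so \<open>p \<mapsto> \<phi> p\<close> and \<open>q \<mapsto> \<phi>\<^sup>-\<^sup>1 q\<close> are mutually inverse, preserve and reflect inclusion,
  and \<open>\<phi>\<^sup>-\<^sup>1\<close> commutes with intersections. Being properly zipped is a statement about
  exactly this structure, so it transfers along \<open>\<phi>\<close>. The first projections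
  \<open>R \<bowtie>\<^sup>f J \<rightarrow> R\<close> and \<open>R \<ltimes> M \<rightarrow> R\<close> are such homomorphisms: their kernels \<open>0 \<times> J\<close> and
  \<open>0 \<times> M\<close> are nil because \<open>J \<subseteq> Nil(S)\<close> and \<open>(0, m)\<^sup>2 = 0\<close>.\<close>

lemma (in primeideal) mem_of_pow_mem:
  assumes "x \<in> carrier R" and "x [^] (n::nat) \<in> I"
  shows "x \<in> I"
  using assms(2)
proof (induction n)
  case 0
  then have "I = carrier R" by (simp add: one_imp_carrier)
  with I_notcarr show ?case by simp
next
  case (Suc n)
  then have "x [^] n \<in> I \<or> x \<in> I" using I_prime assms(1) by simp
  with Suc.IH show ?case by blast
qed

lemma properly_zippedI:
  assumes "\<And>p P. \<lbrakk>primeideal p A; \<And>q. q \<in> P \<Longrightarrow> primeideal q A; carrier A \<inter> \<Inter>P \<subseteq> p\<rbrakk>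
    \<Longrightarrow> \<exists>q\<in>P. q \<subseteq> p"
  shows "properly_zipped A"
  unfolding properly_zipped_def by (auto intro: assms)

lemma properly_zippedD:
  assumes "properly_zipped A" and "primeideal p A" and "\<And>q. q \<in> P \<Longrightarrow> primeideal q A"
    and "carrier A \<inter> \<Inter>P \<subseteq> p"
  obtains q where "q \<in> P" and "q \<subseteq> p"
proof -
  from assms(1) have "primeideal p A \<longrightarrow> (\<forall>q\<in>P. primeideal q A) \<longrightarrow>
      carrier A \<inter> \<Inter>P \<subseteq> p \<longrightarrow> (\<exists>q\<in>P. q \<subseteq> p)"
    unfolding properly_zipped_def by blast
  with assms(2-4) that show ?thesis by blast
qed

locale ring_epi_nil_kernel = ring_hom_cring A B \<phi> for A (structure) and B and \<phi> +
  assumes surj: "\<phi> ` carrier A = carrier B"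
    and kernel_nil: "\<lbrakk>x \<in> carrier A; \<phi> x = \<zero>\<^bsub>B\<^esub>\<rbrakk> \<Longrightarrow> \<exists>n::nat. x [^] n = \<zero>"
begin

definition contraction
  where "contraction q = {x \<in> carrier A. \<phi> x \<in> q}"

lemma primeideal_contraction: "primeideal q B \<Longrightarrow> primeideal (contraction q) A"
  unfolding contraction_def by (rule ring.primeideal_vimage[OF R.is_cring])

lemma contraction_mono: "q \<subseteq> q' \<Longrightarrow> contraction q \<subseteq> contraction q'"
  unfolding contraction_def by blast

lemma contraction_subset_contraction_iff:
  assumes "q \<subseteq> carrier B"
  shows "contraction q \<subseteq> contraction q' \<longleftrightarrow> q \<subseteq> q'"
proof
  assume sub: "contraction q \<subseteq> contraction q'"
  show "q \<subseteq> q'"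
  proof
    fix y assume "y \<in> q"
    with assms surj obtain x where "x \<in> carrier A" "\<phi> x = y" by (metis imageE subsetD)
    with sub \<open>y \<in> q\<close> show "y \<in> q'" unfolding contraction_def by blast
  qed
qed (rule contraction_mono)

lemma Inter_contraction: "carrier A \<inter> \<Inter> (contraction ` P) = contraction (carrier B \<inter> \<Inter> P)"
  unfolding contraction_def by auto

lemma kernel_subset_primeideal:
  assumes "primeideal p A" and "x \<in> carrier A" and "\<phi> x = \<zero>\<^bsub>B\<^esub>"
  shows "x \<in> p"
proof -
  interpret primeideal p A by fact
  from kernel_nil assms(2,3) obtain n :: nat where "x [^] n = \<zero>" by blast
  then show ?thesis using mem_of_pow_mem[OF assms(2), of n] zero_closed by simp
qed

lemma contraction_image_primeideal:
  assumes p: "primeideal p A"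
  shows "contraction (\<phi> ` p) = p"
proof
  interpret primeideal p A by fact
  show "p \<subseteq> contraction (\<phi> ` p)" using a_subset unfolding contraction_def by blast
  show "contraction (\<phi> ` p) \<subseteq> p"
  proof
    fix x assume "x \<in> contraction (\<phi> ` p)"
    then obtain z where x: "x \<in> carrier A" and z: "z \<in> p" "\<phi> x = \<phi> z"
      unfolding contraction_def by blast
    have zc: "z \<in> carrier A" using z a_subset by blast
    have "\<phi> (x \<ominus> z) = \<zero>\<^bsub>B\<^esub>" using x zc z by (simp add: a_minus_def S.r_neg)
    then have "x \<ominus> z \<in> p" using kernel_subset_primeideal[OF p] x zc by simp
    then have "(x \<ominus> z) \<oplus> z \<in> p" using z by simp
    moreover have "(x \<ominus> z) \<oplus> z = x" using x zc by (simp add: a_minus_def R.a_assoc R.l_neg)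
    ultimately show "x \<in> p" by simp
  qed
qed

lemma primeideal_image:
  assumes p: "primeideal p A"
  shows "primeideal (\<phi> ` p) B"
proof -
  interpret P: primeideal p A by fact
  have p_contr: "contraction (\<phi> ` p) = p" by (rule contraction_image_primeideal[OF p])
  have "ideal (\<phi> ` p) B"
  proof (rule idealI)
    show "subgroup (\<phi> ` p) (add_monoid B)"
      by (rule ring.img_is_add_subgroup[OF P.a_subgroup])
    fix a x assume "a \<in> \<phi> ` p" and "x \<in> carrier B"
    with surj obtain z y where zy: "z \<in> p" "a = \<phi> z" "y \<in> carrier A" "x = \<phi> y" by blast
    then have "y \<otimes> z \<in> p" "z \<otimes> y \<in> p" by (simp_all add: P.I_l_closed P.I_r_closed)
    moreover have "x \<otimes>\<^bsub>B\<^esub> a = \<phi> (y \<otimes> z)" "a \<otimes>\<^bsub>B\<^esub> x = \<phi> (z \<otimes> y)"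
      using zy P.a_subset by auto
    ultimately show "x \<otimes>\<^bsub>B\<^esub> a \<in> \<phi> ` p" "a \<otimes>\<^bsub>B\<^esub> x \<in> \<phi> ` p" by simp_all
  qed (rule S.ring_axioms)
  moreover have "carrier B \<noteq> \<phi> ` p"
  proof
    assume "carrier B = \<phi> ` p"
    then have "carrier A = p" using p_contr unfolding contraction_def by auto
    with P.I_notcarr show False by simp
  qed
  moreover have "a \<in> \<phi> ` p \<or> b \<in> \<phi> ` p"
    if "a \<in> carrier B" "b \<in> carrier B" "a \<otimes>\<^bsub>B\<^esub> b \<in> \<phi> ` p" for a b
  proof -
    from that surj obtain x y where xy: "x \<in> carrier A" "y \<in> carrier A" "a = \<phi> x" "b = \<phi> y"
      by blast
    with that have "x \<otimes> y \<in> contraction (\<phi> ` p)" unfolding contraction_def by simp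
    then have "x \<in> p \<or> y \<in> p" using p_contr P.I_prime xy by simp
    with xy show ?thesis by blast
  qed
  ultimately show ?thesis by (intro primeidealI[OF _ S.is_cring]) blast+
qed

lemma properly_zipped_codomain:
  assumes "properly_zipped A"
  shows "properly_zipped B"
proof (rule properly_zippedI)
  fix p P
  assume p: "primeideal p B" and P: "\<And>q. q \<in> P \<Longrightarrow> primeideal q B"
    and "carrier B \<inter> \<Inter>P \<subseteq> p"
  then have "carrier A \<inter> \<Inter> (contraction ` P) \<subseteq> contraction p"
    by (simp add: Inter_contraction contraction_mono)
  moreover have "\<And>q. q \<in> contraction ` P \<Longrightarrow> primeideal q A"
    using P primeideal_contraction by auto
  ultimately obtain q where q: "q \<in> P" "contraction q \<subseteq> contraction p"
    using properly_zippedD[OF assms primeideal_contraction[OF p]] by (metis imageE)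
  have "q \<subseteq> carrier B" using P[OF q(1)] by (meson ideal.Icarr primeideal.axioms(1) subsetI)
  with q show "\<exists>q\<in>P. q \<subseteq> p" by (auto simp: contraction_subset_contraction_iff)
qed

lemma properly_zipped_domain:
  assumes "properly_zipped B"
  shows "properly_zipped A"
proof (rule properly_zippedI)
  fix p P
  assume p: "primeideal p A" and P: "\<And>q. q \<in> P \<Longrightarrow> primeideal q A"
    and "carrier A \<inter> \<Inter>P \<subseteq> p"
  have "contraction ` (`) \<phi> ` P = P"
    using P contraction_image_primeideal by (simp add: image_image)
  with \<open>carrier A \<inter> \<Inter>P \<subseteq> p\<close>
  have "contraction (carrier B \<inter> \<Inter> ((`) \<phi> ` P)) \<subseteq> contraction (\<phi> ` p)"
    by (simp add: Inter_contraction[symmetric] contraction_image_primeideal[OF p])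
  then have "carrier B \<inter> \<Inter> ((`) \<phi> ` P) \<subseteq> \<phi> ` p"
    by (simp add: contraction_subset_contraction_iff)
  moreover have "\<And>q. q \<in> (`) \<phi> ` P \<Longrightarrow> primeideal q B"
    using P primeideal_image by auto
  ultimately obtain q where q: "q \<in> P" "\<phi> ` q \<subseteq> \<phi> ` p"
    using properly_zippedD[OF assms primeideal_image[OF p]] by (metis imageE)
  then have "contraction (\<phi> ` q) \<subseteq> contraction (\<phi> ` p)"
    using contraction_mono by blast
  with q show "\<exists>q\<in>P. q \<subseteq> p"
    using P[OF q(1)] p by (auto simp: contraction_image_primeideal)
qed

lemma properly_zipped_iff: "properly_zipped A \<longleftrightarrow> properly_zipped B"
  using properly_zipped_codomain properly_zipped_domain by blast

end

lemma
  shows RDirProd_mult: "(a, b) \<otimes>\<^bsub>RDirProd R S\<^esub> (c, d) = (a \<otimes>\<^bsub>R\<^esub> c, b \<otimes>\<^bsub>S\<^esub> d)"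
    and RDirProd_add: "(a, b) \<oplus>\<^bsub>RDirProd R S\<^esub> (c, d) = (a \<oplus>\<^bsub>R\<^esub> c, b \<oplus>\<^bsub>S\<^esub> d)"
    and RDirProd_one: "\<one>\<^bsub>RDirProd R S\<^esub> = (\<one>\<^bsub>R\<^esub>, \<one>\<^bsub>S\<^esub>)"
    and RDirProd_zero: "\<zero>\<^bsub>RDirProd R S\<^esub> = (\<zero>\<^bsub>R\<^esub>, \<zero>\<^bsub>S\<^esub>)"
  by (simp_all add: RDirProd_def DirProd_def monoid.defs)

lemma RDirProd_a_inv:
  assumes "ring R" and "ring S" and "a \<in> carrier R" and "b \<in> carrier S"
  shows "\<ominus>\<^bsub>RDirProd R S\<^esub> (a, b) = (\<ominus>\<^bsub>R\<^esub> a, \<ominus>\<^bsub>S\<^esub> b)"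
  using assms unfolding a_inv_def RDirProd_add_monoid
  by (simp add: ring.is_abelian_group abelian_group.a_group)

lemma RDirProd_nat_pow:
  "(a, b) [^]\<^bsub>RDirProd R S\<^esub> (n::nat) = (a [^]\<^bsub>R\<^esub> n, b [^]\<^bsub>S\<^esub> n)"
  by (induction n) (simp_all add: RDirProd_mult RDirProd_one)

lemma cring_RDirProd:
  assumes "cring R" and "cring S"
  shows "cring (RDirProd R S)"
proof -
  interpret R: cring R by fact
  interpret S: cring S by fact
  interpret T: ring "RDirProd R S"
    using RDirProd_ring R.ring_axioms S.ring_axioms by blast
  show ?thesis
  proof (intro cring.intro comm_monoid.intro comm_monoid_axioms.intro)
    fix x y assume "x \<in> carrier (RDirProd R S)" "y \<in> carrier (RDirProd R S)"
    then show "x \<otimes>\<^bsub>RDirProd R S\<^esub> y = y \<otimes>\<^bsub>RDirProd R S\<^esub> x"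
      by (auto simp: RDirProd_carrier RDirProd_mult R.m_comm S.m_comm)
  qed (rule T.ring_axioms T.monoid_axioms)+
qed

lemma amalgamation_carrier:
  "carrier (amalgamation R S f J) = {(r, f r \<oplus>\<^bsub>S\<^esub> j) | r j. r \<in> carrier R \<and> j \<in> J}"
  by (simp add: amalgamation_def)

lemma subring_amalgamation:
  assumes R: "ring R" and S: "ring S" and f: "f \<in> ring_hom R S" and J: "ideal J S"
  shows "subring (carrier (amalgamation R S f J)) (RDirProd R S)"
proof -
  interpret R: ring R by fact
  interpret S: ring S by fact
  interpret J: ideal J S by fact
  interpret f: ring_hom_ring R S f using R S f by (intro ring_hom_ringI2)
  interpret T: ring "RDirProd R S" using RDirProd_ring R S by blast
  show ?thesis unfolding amalgamation_carrier
  proof (rule T.subringI)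
    show "{(r, f r \<oplus>\<^bsub>S\<^esub> j) | r j. r \<in> carrier R \<and> j \<in> J} \<subseteq> carrier (RDirProd R S)"
      by (auto simp: RDirProd_carrier)
    have "\<one>\<^bsub>RDirProd R S\<^esub> = (\<one>\<^bsub>R\<^esub>, f \<one>\<^bsub>R\<^esub> \<oplus>\<^bsub>S\<^esub> \<zero>\<^bsub>S\<^esub>)" by (simp add: RDirProd_one)
    then show "\<one>\<^bsub>RDirProd R S\<^esub> \<in> {(r, f r \<oplus>\<^bsub>S\<^esub> j) | r j. r \<in> carrier R \<and> j \<in> J}"
      using R.one_closed J.zero_closed by blast
  next
    fix h1 h2 assume "h1 \<in> {(r, f r \<oplus>\<^bsub>S\<^esub> j) | r j. r \<in> carrier R \<and> j \<in> J}"
      and "h2 \<in> {(r, f r \<oplus>\<^bsub>S\<^esub> j) | r j. r \<in> carrier R \<and> j \<in> J}"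
    then obtain r j r' j' where h: "h1 = (r, f r \<oplus>\<^bsub>S\<^esub> j)" "h2 = (r', f r' \<oplus>\<^bsub>S\<^esub> j')"
      and rj: "r \<in> carrier R" "j \<in> J" "r' \<in> carrier R" "j' \<in> J" by blast
    then have jS: "j \<in> carrier S" "j' \<in> carrier S" by auto
    have "\<ominus>\<^bsub>RDirProd R S\<^esub> h1 = (\<ominus>\<^bsub>R\<^esub> r, f (\<ominus>\<^bsub>R\<^esub> r) \<oplus>\<^bsub>S\<^esub> \<ominus>\<^bsub>S\<^esub> j)"
      using h rj jS by (simp add: RDirProd_a_inv R S S.minus_add)
    with rj show "\<ominus>\<^bsub>RDirProd R S\<^esub> h1 \<in> {(r, f r \<oplus>\<^bsub>S\<^esub> j) | r j. r \<in> carrier R \<and> j \<in> J}"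
      by blast
    have "h1 \<otimes>\<^bsub>RDirProd R S\<^esub> h2 = (r \<otimes>\<^bsub>R\<^esub> r',
        f (r \<otimes>\<^bsub>R\<^esub> r') \<oplus>\<^bsub>S\<^esub> (f r \<otimes>\<^bsub>S\<^esub> j' \<oplus>\<^bsub>S\<^esub> j \<otimes>\<^bsub>S\<^esub> (f r' \<oplus>\<^bsub>S\<^esub> j')))"
      using h rj jS by (simp add: RDirProd_mult S.l_distr S.r_distr S.a_ac)
    moreover have "f r \<otimes>\<^bsub>S\<^esub> j' \<oplus>\<^bsub>S\<^esub> j \<otimes>\<^bsub>S\<^esub> (f r' \<oplus>\<^bsub>S\<^esub> j') \<in> J"
      using rj jS by (simp add: J.I_l_closed J.I_r_closed)
    ultimately show "h1 \<otimes>\<^bsub>RDirProd R S\<^esub> h2 \<in> {(r, f r \<oplus>\<^bsub>S\<^esub> j) | r j. r \<in> carrier R \<and> j \<in> J}"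
      using rj by blast
    have "h1 \<oplus>\<^bsub>RDirProd R S\<^esub> h2 = (r \<oplus>\<^bsub>R\<^esub> r', f (r \<oplus>\<^bsub>R\<^esub> r') \<oplus>\<^bsub>S\<^esub> (j \<oplus>\<^bsub>S\<^esub> j'))"
      using h rj jS by (simp add: RDirProd_add S.a_ac)
    with rj show "h1 \<oplus>\<^bsub>RDirProd R S\<^esub> h2 \<in> {(r, f r \<oplus>\<^bsub>S\<^esub> j) | r j. r \<in> carrier R \<and> j \<in> J}"
      by blast
  qed
qed

lemma cring_amalgamation:
  assumes "cring R" and "cring S" and "f \<in> ring_hom R S" and "ideal J S"
  shows "cring (amalgamation R S f J)"
proof -
  interpret T: cring "RDirProd R S" using cring_RDirProd assms(1,2) by blast
  have "subring (carrier (amalgamation R S f J)) (RDirProd R S)"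
    using assms by (intro subring_amalgamation) (simp_all add: cring.axioms(1))
  then show ?thesis
    using T.subcringI' T.subcring_iff[OF subringE(1)] by (simp add: amalgamation_def)
qed

lemma amalgamation_nat_pow:
  "x [^]\<^bsub>amalgamation R S f J\<^esub> (n::nat) = x [^]\<^bsub>RDirProd R S\<^esub> n"
  by (simp add: amalgamation_def nat_pow_def)

lemma ring_epi_nil_kernel_amalgamation:
  assumes R: "cring R" and S: "cring S" and f: "f \<in> ring_hom R S" and J: "ideal J S"
    and nil: "J \<subseteq> nilradical S"
  shows "ring_epi_nil_kernel (amalgamation R S f J) R fst"
proof (intro ring_epi_nil_kernel.intro ring_epi_nil_kernel_axioms.intro ring_hom_cringI)
  interpret R: cring R by fact
  interpret S: cring S by fact
  interpret J: ideal J S by fact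
  show "cring (amalgamation R S f J)" by (rule cring_amalgamation[OF R S f J])
  show "cring R" by (rule R)
  show "fst \<in> ring_hom (amalgamation R S f J) R"
    by (auto simp: ring_hom_def amalgamation_def RDirProd_mult RDirProd_add RDirProd_one)
  show "fst ` carrier (amalgamation R S f J) = carrier R"
  proof
    show "carrier R \<subseteq> fst ` carrier (amalgamation R S f J)"
    proof
      fix r assume "r \<in> carrier R"
      then have "(r, f r \<oplus>\<^bsub>S\<^esub> \<zero>\<^bsub>S\<^esub>) \<in> carrier (amalgamation R S f J)"
        unfolding amalgamation_carrier using J.zero_closed by blast
      then show "r \<in> fst ` carrier (amalgamation R S f J)" by force
    qed
  qed (auto simp: amalgamation_carrier)
  fix x assume "x \<in> carrier (amalgamation R S f J)" and "fst x = \<zero>\<^bsub>R\<^esub>"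
  then obtain j where j: "j \<in> J" and x: "x = (\<zero>\<^bsub>R\<^esub>, j)"
    unfolding amalgamation_carrier
    using ring_hom_zero[OF f R.ring_axioms S.ring_axioms] J.Icarr by auto
  with nil obtain n :: nat where "j [^]\<^bsub>S\<^esub> n = \<zero>\<^bsub>S\<^esub>"
    unfolding nilradical_def by blast
  then have "x [^]\<^bsub>amalgamation R S f J\<^esub> Suc n = \<zero>\<^bsub>amalgamation R S f J\<^esub>"
    using j unfolding x amalgamation_nat_pow RDirProd_nat_pow
    by (simp add: amalgamation_def RDirProd_zero J.Icarr)
  then show "\<exists>n::nat. x [^]\<^bsub>amalgamation R S f J\<^esub> n = \<zero>\<^bsub>amalgamation R S f J\<^esub>" ..
qed

lemma
  shows trivial_extension_carrier: "carrier (trivial_extension R M) = carrier R \<times> carrier M"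
    and trivial_extension_mult: "(a, m) \<otimes>\<^bsub>trivial_extension R M\<^esub> (b, n) =
      (a \<otimes>\<^bsub>R\<^esub> b, a \<odot>\<^bsub>M\<^esub> n \<oplus>\<^bsub>M\<^esub> b \<odot>\<^bsub>M\<^esub> m)"
    and trivial_extension_add: "(a, m) \<oplus>\<^bsub>trivial_extension R M\<^esub> (b, n) =
      (a \<oplus>\<^bsub>R\<^esub> b, m \<oplus>\<^bsub>M\<^esub> n)"
    and trivial_extension_one: "\<one>\<^bsub>trivial_extension R M\<^esub> = (\<one>\<^bsub>R\<^esub>, \<zero>\<^bsub>M\<^esub>)"
    and trivial_extension_zero: "\<zero>\<^bsub>trivial_extension R M\<^esub> = (\<zero>\<^bsub>R\<^esub>, \<zero>\<^bsub>M\<^esub>)"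
  by (simp_all add: trivial_extension_def)

lemmas trivial_extension_simps = trivial_extension_carrier trivial_extension_mult
  trivial_extension_add trivial_extension_one trivial_extension_zero

lemma abelian_group_trivial_extension:
  fixes R (structure) and M :: "('a, 'c) module"
  assumes "module R M"
  shows "abelian_group (trivial_extension R M)"
proof -
  interpret module R M by fact
  let ?E = "trivial_extension R M"
  show ?thesis
  proof (rule abelian_groupI)
    fix x y z assume "x \<in> carrier ?E" "y \<in> carrier ?E" "z \<in> carrier ?E"
    then obtain a m b n c k where xyz: "x = (a, m)" "y = (b, n)" "z = (c, k)"
      and carr: "a \<in> carrier R" "m \<in> carrier M" "b \<in> carrier R" "n \<in> carrier M"
        "c \<in> carrier R" "k \<in> carrier M"
      by (auto simp: trivial_extension_carrier)
    show "x \<oplus>\<^bsub>?E\<^esub> y \<in> carrier ?E"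
      using carr by (simp add: xyz trivial_extension_simps)
    show "x \<oplus>\<^bsub>?E\<^esub> y \<oplus>\<^bsub>?E\<^esub> z = x \<oplus>\<^bsub>?E\<^esub> (y \<oplus>\<^bsub>?E\<^esub> z)"
      using carr by (simp add: xyz trivial_extension_simps R.a_assoc M.a_assoc)
    show "x \<oplus>\<^bsub>?E\<^esub> y = y \<oplus>\<^bsub>?E\<^esub> x"
      using carr by (simp add: xyz trivial_extension_simps R.a_comm M.a_comm)
    show "\<zero>\<^bsub>?E\<^esub> \<oplus>\<^bsub>?E\<^esub> x = x"
      using carr by (simp add: xyz trivial_extension_simps)
    have "(\<ominus> a, \<ominus>\<^bsub>M\<^esub> m) \<oplus>\<^bsub>?E\<^esub> x = \<zero>\<^bsub>?E\<^esub>"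
      using carr by (simp add: xyz trivial_extension_simps R.l_neg M.l_neg)
    moreover have "(\<ominus> a, \<ominus>\<^bsub>M\<^esub> m) \<in> carrier ?E"
      using carr by (simp add: trivial_extension_carrier)
    ultimately show "\<exists>y\<in>carrier ?E. y \<oplus>\<^bsub>?E\<^esub> x = \<zero>\<^bsub>?E\<^esub>" by blast
  qed (simp add: trivial_extension_simps)
qed

lemma comm_monoid_trivial_extension:
  fixes R (structure) and M :: "('a, 'c) module"
  assumes "module R M"
  shows "comm_monoid (trivial_extension R M)"
proof -
  interpret module R M by fact
  let ?E = "trivial_extension R M"
  show ?thesis
  proof (rule comm_monoidI)
    fix x y z assume "x \<in> carrier ?E" "y \<in> carrier ?E" "z \<in> carrier ?E"
    then obtain a m b n c k where xyz: "x = (a, m)" "y = (b, n)" "z = (c, k)"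
      and carr: "a \<in> carrier R" "m \<in> carrier M" "b \<in> carrier R" "n \<in> carrier M"
        "c \<in> carrier R" "k \<in> carrier M"
      by (auto simp: trivial_extension_carrier)
    show "x \<otimes>\<^bsub>?E\<^esub> y \<in> carrier ?E"
      using carr by (simp add: xyz trivial_extension_simps)
    show "x \<otimes>\<^bsub>?E\<^esub> y = y \<otimes>\<^bsub>?E\<^esub> x"
      using carr by (simp add: xyz trivial_extension_simps R.m_comm M.a_comm)
    show "\<one>\<^bsub>?E\<^esub> \<otimes>\<^bsub>?E\<^esub> x = x"
      using carr by (simp add: xyz trivial_extension_simps)
    have "c \<odot>\<^bsub>M\<^esub> (a \<odot>\<^bsub>M\<^esub> n) = a \<odot>\<^bsub>M\<^esub> (c \<odot>\<^bsub>M\<^esub> n)"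
      and "c \<odot>\<^bsub>M\<^esub> (b \<odot>\<^bsub>M\<^esub> m) = (b \<otimes> c) \<odot>\<^bsub>M\<^esub> m"
      and "(a \<otimes> b) \<odot>\<^bsub>M\<^esub> k = a \<odot>\<^bsub>M\<^esub> (b \<odot>\<^bsub>M\<^esub> k)"
      using carr by (simp_all add: smult_assoc1[symmetric] R.m_comm)
    then show "x \<otimes>\<^bsub>?E\<^esub> y \<otimes>\<^bsub>?E\<^esub> z = x \<otimes>\<^bsub>?E\<^esub> (y \<otimes>\<^bsub>?E\<^esub> z)"
      using carr by (simp add: xyz trivial_extension_simps R.m_assoc smult_r_distr M.a_ac)
  qed (simp add: trivial_extension_simps)
qed

lemma cring_trivial_extension:
  fixes R (structure) and M :: "('a, 'c) module"
  assumes "module R M"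
  shows "cring (trivial_extension R M)"
proof -
  interpret module R M by fact
  let ?E = "trivial_extension R M"
  show ?thesis
  proof (rule cringI[OF abelian_group_trivial_extension[OF assms] comm_monoid_trivial_extension[OF assms]])
    fix x y z assume "x \<in> carrier ?E" "y \<in> carrier ?E" "z \<in> carrier ?E"
    then obtain a m b n c k where "x = (a, m)" "y = (b, n)" "z = (c, k)"
      and "a \<in> carrier R" "m \<in> carrier M" "b \<in> carrier R" "n \<in> carrier M"
        "c \<in> carrier R" "k \<in> carrier M"
      by (auto simp: trivial_extension_carrier)
    then show "(x \<oplus>\<^bsub>?E\<^esub> y) \<otimes>\<^bsub>?E\<^esub> z = x \<otimes>\<^bsub>?E\<^esub> z \<oplus>\<^bsub>?E\<^esub> y \<otimes>\<^bsub>?E\<^esub> z"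
      by (simp add: trivial_extension_simps R.l_distr smult_l_distr smult_r_distr M.a_ac)
  qed
qed

lemma ring_epi_nil_kernel_trivial_extension:
  fixes R (structure) and M :: "('a, 'c) module"
  assumes "module R M"
  shows "ring_epi_nil_kernel (trivial_extension R M) R fst"
proof -
  interpret module R M by fact
  let ?E = "trivial_extension R M"
  show ?thesis
  proof (intro ring_epi_nil_kernel.intro ring_epi_nil_kernel_axioms.intro ring_hom_cringI)
    show "cring ?E" by (rule cring_trivial_extension[OF assms])
    show "cring R" by (rule R.is_cring)
    show "fst \<in> ring_hom ?E R" by (auto simp: ring_hom_def trivial_extension_simps)
    show "fst ` carrier ?E = carrier R" by (force simp: trivial_extension_carrier)
    fix x assume "x \<in> carrier ?E" and "fst x = \<zero>"
    then obtain m where "m \<in> carrier M" and x: "x = (\<zero>, m)"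
      by (auto simp: trivial_extension_carrier)
    then have "x [^]\<^bsub>?E\<^esub> (2::nat) = \<zero>\<^bsub>?E\<^esub>"
      by (simp add: numeral_2_eq_2 trivial_extension_simps)
    then show "\<exists>n::nat. x [^]\<^bsub>?E\<^esub> n = \<zero>\<^bsub>?E\<^esub>" ..
  qed
qed

theorem corollary4p9:
  fixes R :: "('a, 'm) ring_scheme"
  assumes "cring R"
  shows "(\<forall>(S :: ('b, 'n) ring_scheme) (f :: 'a \<Rightarrow> 'b) (J :: 'b set).
            cring S \<and> f \<in> ring_hom R S \<and> ideal J S \<and> J \<noteq> {\<zero>\<^bsub>S\<^esub>} \<and> J \<noteq> carrier S
            \<and> J \<subseteq> nilradical S \<longrightarrow>
            (properly_zipped (amalgamation R S f J) \<longleftrightarrow> properly_zipped R))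
    \<and> (\<forall>M :: ('a, 'c) module. module R M \<longrightarrow>
         (properly_zipped (trivial_extension R M) \<longleftrightarrow> properly_zipped R))"
proof (intro conjI allI impI)
  fix S :: "('b, 'n) ring_scheme" and f J
  assume "cring S \<and> f \<in> ring_hom R S \<and> ideal J S \<and> J \<noteq> {\<zero>\<^bsub>S\<^esub>} \<and> J \<noteq> carrier S
    \<and> J \<subseteq> nilradical S"
  then have "ring_epi_nil_kernel (amalgamation R S f J) R fst"
    using ring_epi_nil_kernel_amalgamation[OF assms] by blast
  then show "properly_zipped (amalgamation R S f J) \<longleftrightarrow> properly_zipped R"
    by (rule ring_epi_nil_kernel.properly_zipped_iff)
next
  fix M :: "('a, 'c) module"
  assume "module R M"
  then show "properly_zipped (trivial_extension R M) \<longleftrightarrow> properly_zipped R"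
    by (rule ring_epi_nil_kernel.properly_zipped_iff[OF ring_epi_nil_kernel_trivial_extension])
qed

end
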